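(* Let $s$ be a real number with $\frac32<s\le 2$, let $\alpha,\beta>0$ be fixed, and let $K>0$. Suppose that for each $n$ (in an infinite set of natural numbers) $P_n\subset[0,1]^2$ is a set of $n$ points that is $s$-adaptable with constant $K$. Then there exist constants $C,N>0$, independent of $n$, such that for all such $n>N$, $$|\Pi_{\alpha,\beta}(P_n)|\le C\, n^{\frac43+\frac1s}\log n .$$
   Context: For a finite set $P\subset\mathbb R^2$ and real numbers $\alpha,\beta$, define the set of ordered triples $$\Pi_{\alpha,\beta}(P)=\{(p,q,r)\in P\times P\times P:\ p\cdot q=\alpha \text{ and } p\cdot r=\beta\},$$ where $\cdot$ is the standard dot product on $\mathbb R^2$ (the points $p,q,r$ need not be distinct). A set $P\subset[0,1]^2$ of $n$ points is called $s$-adaptable with constant $K$ if it satisfies (energy) $\displaystyle \frac{1}{\binom n2}\sum_{p,q\in P,\ p\neq q}|p-q|^{-s}\le K$, and (separation) $\min\{|p-q|:\ p,q\in P,\ p\neq q\}\ge n^{-1/s}$, where $|\cdot|$ is the Euclidean norm. *)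

theory Defs
  imports "HOL-Analysis.Analysis"
begin

text \<open>Points of the plane are modelled as real \<times> real, whose norm is the Euclidean norm
and whose inner product is the standard dot product.\<close>

definition Pi_ab :: "real \<Rightarrow> real \<Rightarrow> (real \<times> real) set \<Rightarrow> ((real \<times> real) \<times> (real \<times> real) \<times> (real \<times> real)) set" where
  "Pi_ab \<alpha> \<beta> P = {(p, q, r). p \<in> P \<and> q \<in> P \<and> r \<in> P \<and> inner p q = \<alpha> \<and> inner p r = \<beta>}"

definition s_adaptable :: "real \<Rightarrow> real \<Rightarrow> (real \<times> real) set \<Rightarrow> bool" where
  "s_adaptable s K P \<longleftrightarrow>
     finite P \<and> P \<subseteq> {0..1} \<times> {0..1} \<and>
     (1 / real (card P choose 2)) *
        (\<Sum>(p, q) \<in> {(p, q). p \<in> P \<and> q \<in> P \<and> p \<noteq> q}. norm (p - q) powr (- s)) \<le> K \<and>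
     (\<forall>p\<in>P. \<forall>q\<in>P. p \<noteq> q \<longrightarrow> norm (p - q) \<ge> real (card P) powr (- 1 / s))"

end

theory Submission
  imports Defs
begin

text \<open>
  For fixed \<open>p\<close> the points \<open>q\<close> with \<open>p \<bullet> q = \<gamma>\<close> lie on a line. Cutting the unit square
  into \<open>m\<close> strips transversal to that line, Cauchy-Schwarz yields at least \<open>k^2/m - k\<close> ordered
  pairs of such points at distance at most \<open>sqrt 2 / m\<close>, where \<open>k\<close> is the number of points on the
  line, and each of these pairs contributes at least \<open>(sqrt 2 / m) powr (-s)\<close> to the Riesz energy.
  As \<open>\<gamma> \<noteq> 0\<close>, a pair of distinct points lies on the line of at most one \<open>p\<close>, so summing over
  \<open>p\<close> bounds \<open>\<Sum>\<^sub>p (k\<^sub>p^2/m - k\<^sub>p)\<close> by \<open>(sqrt 2 / m) powr s\<close> times the energy, which is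
  at most \<open>K n^2\<close>. Choosing \<open>m \<approx> n powr (1/3)\<close> and using \<open>s \<ge> 3/2\<close> gives
  \<open>\<Sum>\<^sub>p k\<^sub>p^2 = O(n powr (11/6))\<close>, and \<open>|\<Pi>\<^sub>\<alpha>\<^sub>\<beta>| = \<Sum>\<^sub>p a\<^sub>p b\<^sub>p \<le> \<Sum>\<^sub>p (a\<^sub>p^2 + b\<^sub>p^2)/2\<close>.
  Since \<open>11/6 \<le> 4/3 + 1/s\<close>, this is stronger than the claimed bound.
\<close>

definition distinct_pairs :: "'a set \<Rightarrow> ('a \<times> 'a) set" where
  "distinct_pairs A = {(q, r). q \<in> A \<and> r \<in> A \<and> q \<noteq> r}"

lemma finite_distinct_pairs: "finite A \<Longrightarrow> finite (distinct_pairs A)"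
  unfolding distinct_pairs_def by (rule finite_subset[of _ "A \<times> A"]) auto

lemma card_monochromatic_pairs_ge:
  fixes c :: "'a \<Rightarrow> nat"
  assumes "finite A" "m > 0" "c ` A \<subseteq> {..<m}"
  shows "real (card A)^2 / real m - real (card A) \<le> card {(q, r) \<in> distinct_pairs A. c q = c r}"
proof -
  define cls where "cls i = {q \<in> A. c q = i}" for i
  have "{(q, r) \<in> distinct_pairs A. c q = c r} \<union> (\<lambda>q. (q, q)) ` A = (\<Union>i<m. cls i \<times> cls i)"
    using assms(3) by (auto simp: cls_def distinct_pairs_def)
  then have "card {(q, r) \<in> distinct_pairs A. c q = c r} + card ((\<lambda>q. (q, q)) ` A)
      = card (\<Union>i<m. cls i \<times> cls i)"
  proof (subst card_Un_disjoint[symmetric])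
    show "finite {(q, r) \<in> distinct_pairs A. c q = c r}"
      by (rule finite_subset[OF _ finite_distinct_pairs[OF assms(1)]]) auto
  qed (use assms(1) in \<open>auto simp: distinct_pairs_def\<close>)
  also have "\<dots> = (\<Sum>i<m. card (cls i) ^ 2)"
    using assms(1) by (subst card_UN_disjoint) (auto simp: cls_def card_cartesian_product power2_eq_square)
  finally have pairs: "real (card {(q, r) \<in> distinct_pairs A. c q = c r}) + real (card A)
      = (\<Sum>i<m. real (card (cls i)) ^ 2)"
    by (simp flip: of_nat_power of_nat_sum add: card_image inj_on_def)
  have "(\<Sum>i<m. real (card (cls i))) = card A"
    using sum.group[OF assms(1) finite_lessThan assms(3), of "\<lambda>_. 1 :: real"]
    by (simp add: cls_def)
  with sum_squared_le_sum_of_squares[of "\<lambda>i. real (card (cls i))" "{..<m}"]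
  have "real (card A)^2 / real m \<le> (\<Sum>i<m. real (card (cls i)) ^ 2)"
    using assms(2) by (simp add: field_simps)
  with pairs show ?thesis by linarith
qed

text \<open>The cell \<open>[i/m, (i+1)/m]\<close> of \<open>x \<in> [0,1]\<close>; the endpoint \<open>1\<close> belongs to the last cell.\<close>

definition grid_index :: "nat \<Rightarrow> real \<Rightarrow> nat" where
  "grid_index m x = min (m - 1) (nat \<lfloor>real m * x\<rfloor>)"

lemma grid_index_less: "m > 0 \<Longrightarrow> grid_index m x < m"
  unfolding grid_index_def by auto

lemma grid_index_bounds:
  assumes "m > 0" "x \<in> {0..1}"
  shows "real (grid_index m x) \<le> real m * x" "real m * x \<le> real (grid_index m x) + 1"
proof -
  have "0 \<le> real m * x" "real m * x \<le> real m" using assms by (auto simp: mult_left_le)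
  then have "real (nat \<lfloor>real m * x\<rfloor>) \<le> real m * x" "real m * x < real (nat \<lfloor>real m * x\<rfloor>) + 1"
    "real m * x \<le> real (m - 1) + 1"
    using assms(1) by linarith+
  then show "real (grid_index m x) \<le> real m * x" "real m * x \<le> real (grid_index m x) + 1"
    unfolding grid_index_def by (auto simp: min_def)
qed

lemma grid_index_eq_imp_close:
  assumes "m > 0" "x \<in> {0..1}" "y \<in> {0..1}" "grid_index m x = grid_index m y"
  shows "\<bar>x - y\<bar> \<le> 1 / real m"
proof -
  have "\<bar>real m * x - real m * y\<bar> \<le> 1"
    using grid_index_bounds[OF assms(1,2)] grid_index_bounds[OF assms(1,3)] assms(4) by linarith
  also have "\<bar>real m * x - real m * y\<bar> = real m * \<bar>x - y\<bar>"
    by (simp add: abs_mult flip: right_diff_distrib)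
  finally show ?thesis
    using assms(1) by (simp add: field_simps)
qed

lemma inner_eq_at_two_points_imp_eq:
  fixes p p' q r :: "real \<times> real"
  assumes "\<gamma> \<noteq> 0" "q \<noteq> r"
    and "inner p q = \<gamma>" "inner p r = \<gamma>" "inner p' q = \<gamma>" "inner p' r = \<gamma>"
  shows "p = p'"
proof -
  obtain a b a' b' x y u v where pts: "p = (a, b)" "p' = (a', b')" "q = (x, y)" "r = (u, v)"
    by (metis surj_pair)
  define D where "D = x * v - y * u"
  have cramer: "c * D = \<gamma> * (v - y) \<and> d * D = \<gamma> * (x - u)"
    if "c * x + d * y = \<gamma>" "c * u + d * v = \<gamma>" for c d
  proof -
    have "c * D = (c * x + d * y) * v - (c * u + d * v) * y"
      "d * D = (c * u + d * v) * x - (c * x + d * y) * u"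
      by (simp_all add: D_def algebra_simps)
    with that show ?thesis by (simp add: algebra_simps)
  qed
  have sol: "a * D = \<gamma> * (v - y)" "b * D = \<gamma> * (x - u)" "a' * D = \<gamma> * (v - y)" "b' * D = \<gamma> * (x - u)"
    using cramer[of a b] cramer[of a' b'] assms(3-6) pts by auto
  show ?thesis
  proof (cases "D = 0")
    case True
    then have "q = r" using sol assms(1) pts by simp
    with assms(2) show ?thesis ..
  next
    case False
    then show ?thesis using sol pts by (metis mult_right_cancel)
  qed
qed

text \<open>A coordinate that parametrises the line \<open>{x. p \<bullet> x = \<gamma>}\<close>: the axis along which its slope
  is at most \<open>1\<close>, so distances on the line are at most \<open>sqrt 2\<close> times coordinate differences.\<close>

definition line_coord :: "real \<times> real \<Rightarrow> real \<times> real \<Rightarrow> real" where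
  "line_coord p = (if \<bar>snd p\<bar> \<le> \<bar>fst p\<bar> then snd else fst)"

lemma abs_le_abs_if_orthogonal:
  fixes a b x y :: real
  assumes "a * x + b * y = 0" "\<bar>b\<bar> \<le> \<bar>a\<bar>" "a \<noteq> 0"
  shows "\<bar>x\<bar> \<le> \<bar>y\<bar>"
proof -
  have "\<bar>a\<bar> * \<bar>x\<bar> = \<bar>b\<bar> * \<bar>y\<bar>"
    using assms(1) by (metis abs_minus_cancel abs_mult add_eq_0_iff)
  also have "\<dots> \<le> \<bar>a\<bar> * \<bar>y\<bar>" using assms(2) by (simp add: mult_right_mono)
  finally show ?thesis using assms(3) by simp
qed

lemma norm_le_sqrt2_abs:
  fixes x y :: real
  assumes "\<bar>x\<bar> \<le> \<bar>y\<bar>"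
  shows "norm (x, y) \<le> sqrt 2 * \<bar>y\<bar>"
proof -
  have "x^2 + y^2 \<le> (sqrt 2 * \<bar>y\<bar>)^2"
    using assms by (simp add: power_mult_distrib abs_le_square_iff)
  then show ?thesis by (simp add: norm_Pair real_le_lsqrt)
qed

lemma norm_diff_le_line_coord:
  fixes p q r :: "real \<times> real"
  assumes "p \<noteq> 0" "inner p q = inner p r"
  shows "norm (q - r) \<le> sqrt 2 * \<bar>line_coord p q - line_coord p r\<bar>"
proof -
  obtain a b x y where pd: "p = (a, b)" "q - r = (x, y)" by (metis surj_pair)
  have orth: "a * x + b * y = 0"
    using assms(2) pd by (metis inner_Pair inner_diff_right inner_real_def right_minus_eq)
  show ?thesis
  proof (cases "\<bar>b\<bar> \<le> \<bar>a\<bar>")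
    case True
    then have "\<bar>x\<bar> \<le> \<bar>y\<bar>"
      using assms(1) pd orth by (intro abs_le_abs_if_orthogonal[of a x b y]) (auto simp: zero_prod_def)
    then show ?thesis
      using True pd norm_le_sqrt2_abs[of x y] by (simp add: line_coord_def) (metis snd_conv snd_diff)
  next
    case False
    then have "\<bar>y\<bar> \<le> \<bar>x\<bar>"
      using orth by (intro abs_le_abs_if_orthogonal[of b y a x]) (auto simp: algebra_simps)
    then show ?thesis
      using False pd norm_le_sqrt2_abs[of y x]
      by (simp add: line_coord_def norm_Pair add.commute) (metis fst_conv fst_diff)
  qed
qed

lemma norm_diff_le_if_same_grid_cell:
  fixes p q r :: "real \<times> real"
  assumes "m > 0" "q \<in> {0..1} \<times> {0..1}" "r \<in> {0..1} \<times> {0..1}"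
    and "p \<noteq> 0" "inner p q = inner p r"
    and "grid_index m (line_coord p q) = grid_index m (line_coord p r)"
  shows "norm (q - r) \<le> sqrt 2 / real m"
proof -
  have "line_coord p q \<in> {0..1}" "line_coord p r \<in> {0..1}"
    using assms(2,3) by (auto simp: line_coord_def)
  then have "\<bar>line_coord p q - line_coord p r\<bar> \<le> 1 / real m"
    using grid_index_eq_imp_close[OF assms(1) _ _ assms(6)] by blast
  then have "sqrt 2 * \<bar>line_coord p q - line_coord p r\<bar> \<le> sqrt 2 * (1 / real m)"
    by (rule mult_left_mono) simp
  with norm_diff_le_line_coord[OF assms(4,5)] show ?thesis by simp
qed

definition points_on_line :: "(real \<times> real) set \<Rightarrow> real \<times> real \<Rightarrow> real \<Rightarrow> (real \<times> real) set" where
  "points_on_line P p \<gamma> = {q \<in> P. inner p q = \<gamma>}"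

definition riesz_energy :: "real \<Rightarrow> 'a::real_normed_vector set \<Rightarrow> real" where
  "riesz_energy s A = (\<Sum>(q, r) \<in> distinct_pairs A. norm (q - r) powr (- s))"

lemma riesz_energy_nonneg: "riesz_energy s A \<ge> 0"
  unfolding riesz_energy_def by (auto intro: sum_nonneg)

lemma riesz_energy_on_line_ge:
  fixes A :: "(real \<times> real) set"
  assumes "finite A" "A \<subseteq> {0..1} \<times> {0..1}" "\<And>q. q \<in> A \<Longrightarrow> inner p q = \<gamma>" "\<gamma> \<noteq> 0"
    and "m > 0" "s \<ge> 0"
  shows "(real (card A)^2 / real m - real (card A)) * (sqrt 2 / real m) powr (- s) \<le> riesz_energy s A"
proof -
  define c where "c q = grid_index m (line_coord p q)" for q
  define M where "M = {(q, r) \<in> distinct_pairs A. c q = c r}"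
  define w where "w = (sqrt 2 / real m) powr (- s)"
  have close: "w \<le> norm (q - r) powr (- s)" if "(q, r) \<in> M" for q r
  proof -
    have "q \<in> A" "r \<in> A" "q \<noteq> r" "c q = c r" using that by (auto simp: M_def distinct_pairs_def)
    moreover from this have "p \<noteq> 0" using assms(3,4) inner_zero_left by metis
    ultimately have "norm (q - r) \<le> sqrt 2 / real m"
      using assms(2,3,5) by (intro norm_diff_le_if_same_grid_cell[where p = p]) (auto simp: c_def)
    with \<open>q \<noteq> r\<close> show ?thesis
      unfolding w_def by (intro powr_mono2') (use assms(6) in auto)
  qed
  have "(real (card A)^2 / real m - real (card A)) * w \<le> real (card M) * w"
    using card_monochromatic_pairs_ge[OF assms(1,5), of c] grid_index_less[OF assms(5)]
    by (intro mult_right_mono) (auto simp: M_def c_def w_def)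
  also have "\<dots> \<le> (\<Sum>(q, r) \<in> M. norm (q - r) powr (- s))"
    using sum_mono[of M "\<lambda>_. w" "\<lambda>(q, r). norm (q - r) powr (- s)"] close by auto
  also have "\<dots> \<le> riesz_energy s A"
    unfolding riesz_energy_def
    by (rule sum_mono2[OF finite_distinct_pairs[OF assms(1)]]) (auto simp: M_def)
  finally show ?thesis unfolding w_def .
qed

lemma sum_riesz_energy_on_lines_le:
  assumes "finite P" "\<gamma> \<noteq> 0"
  shows "(\<Sum>p\<in>P. riesz_energy s (points_on_line P p \<gamma>)) \<le> riesz_energy s P"
proof -
  define g where "g = (\<lambda>(q :: real \<times> real, r). norm (q - r) powr (- s))"
  define D where "D p = distinct_pairs (points_on_line P p \<gamma>)" for p
  have fin: "finite (D p)" for p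
    using assms(1) by (simp add: D_def points_on_line_def finite_distinct_pairs)
  have disj: "D p \<inter> D p' = {}" if "p \<noteq> p'" for p p'
  proof (rule ccontr)
    assume "D p \<inter> D p' \<noteq> {}"
    then obtain q r where "q \<noteq> r" "inner p q = \<gamma>" "inner p r = \<gamma>" "inner p' q = \<gamma>" "inner p' r = \<gamma>"
      by (auto simp: D_def distinct_pairs_def points_on_line_def)
    with that show False using inner_eq_at_two_points_imp_eq[OF assms(2)] by blast
  qed
  have "(\<Sum>p\<in>P. riesz_energy s (points_on_line P p \<gamma>)) = (\<Sum>p\<in>P. sum g (D p))"
    by (simp add: riesz_energy_def D_def g_def)
  also have "\<dots> = sum g (\<Union>p\<in>P. D p)"
    by (rule sum.UNION_disjoint[symmetric]) (use assms(1) fin disj in auto)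
  also have "\<dots> \<le> sum g (distinct_pairs P)"
  proof (rule sum_mono2[OF finite_distinct_pairs[OF assms(1)]])
    show "(\<Union>p\<in>P. D p) \<subseteq> distinct_pairs P"
      by (auto simp: D_def distinct_pairs_def points_on_line_def)
  qed (auto simp: g_def)
  finally show ?thesis by (simp add: riesz_energy_def g_def)
qed

lemma sum_card_on_line_sq_le:
  assumes "finite P" "P \<subseteq> {0..1} \<times> {0..1}" "\<gamma> \<noteq> 0" "m > 0" "s \<ge> 0"
  shows "(\<Sum>p\<in>P. real (card (points_on_line P p \<gamma>))^2)
    \<le> real (card P) * real m^2 + 2 * real m * (sqrt 2 / real m) powr s * riesz_energy s P"
proof -
  define k where "k p = real (card (points_on_line P p \<gamma>))" for p
  define w where "w = (sqrt 2 / real m) powr s"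
  have w: "w > 0" "(sqrt 2 / real m) powr (- s) = 1 / w"
    using assms(4) by (auto simp: w_def powr_minus divide_inverse)
  have "(\<Sum>p\<in>P. (k p ^ 2 / real m - k p) * (1 / w)) \<le> (\<Sum>p\<in>P. riesz_energy s (points_on_line P p \<gamma>))"
    using assms(1,2,3,4,5) unfolding k_def w(2)[symmetric]
    by (intro sum_mono riesz_energy_on_line_ge) (auto simp: points_on_line_def)
  also have "\<dots> \<le> riesz_energy s P"
    using sum_riesz_energy_on_lines_le[OF assms(1,3)] .
  also have "(\<Sum>p\<in>P. (k p ^ 2 / real m - k p) * (1 / w))
      = ((\<Sum>p\<in>P. k p ^ 2) - real m * (\<Sum>p\<in>P. k p)) / (real m * w)"
  proof -
    have "(k p ^ 2 / real m - k p) * (1 / w) = (k p ^ 2 - real m * k p) / (real m * w)" for p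
      using assms(4) w(1) by (simp add: field_simps)
    then show ?thesis
      by (simp add: sum_divide_distrib[symmetric] sum_subtractf sum_distrib_left)
  qed
  finally have "(\<Sum>p\<in>P. k p ^ 2) - real m * (\<Sum>p\<in>P. k p) \<le> real m * w * riesz_energy s P"
    using w(1) assms(4) by (simp add: pos_divide_le_eq mult.commute)
  moreover have "real m * (\<Sum>p\<in>P. k p) \<le> (\<Sum>p\<in>P. k p ^ 2) / 2 + real (card P) * real m^2 / 2"
  proof -
    have "real m * k p \<le> k p ^ 2 / 2 + real m^2 / 2" for p
      using sum_squares_bound[of "real m" "k p"] by (simp add: power2_eq_square)
    then have "(\<Sum>p\<in>P. real m * k p) \<le> (\<Sum>p\<in>P. k p ^ 2 / 2 + real m^2 / 2)"
      by (rule sum_mono)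
    then show ?thesis by (simp add: sum_distrib_left sum.distrib sum_divide_distrib)
  qed
  ultimately show ?thesis unfolding k_def w_def by linarith
qed

lemma riesz_energy_le_if_s_adaptable:
  assumes "s_adaptable s K P" "card P \<ge> 2"
  shows "riesz_energy s P \<le> K * real (card P)^2"
proof -
  have pos: "real (card P choose 2) > 0" using assms(2) by simp
  then have "riesz_energy s P \<le> K * real (card P choose 2)"
    using assms(1) by (simp add: s_adaptable_def riesz_energy_def distinct_pairs_def field_simps)
  moreover have "0 \<le> K"
    using calculation riesz_energy_nonneg[of s P] pos by (meson order_trans zero_le_mult_iff not_le)
  moreover have "real (card P choose 2) \<le> real (card P)^2"
    using binomial_le_pow[of 2 "card P"] assms(2) by (simp flip: of_nat_power)
  ultimately show ?thesis by (meson mult_left_mono order_trans)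
qed

lemma sum_card_on_line_sq_le_power:
  assumes "s_adaptable s K P" "3/2 \<le> s" "s \<le> 2" "\<gamma> \<noteq> 0" "card P \<ge> 2"
  shows "(\<Sum>p\<in>P. real (card (points_on_line P p \<gamma>))^2) \<le> (4 + 4 * K) * real (card P) powr (11/6)"
proof -
  define n where "n = real (card P)"
  define t where "t = n powr (1/3)"
  define m where "m = nat \<lceil>t\<rceil>"
  have n: "n \<ge> 2" using assms(5) by (simp add: n_def)
  have t: "1 \<le> t" using n by (simp add: t_def ge_one_powr_ge_zero)
  have m: "t \<le> real m" "real m \<le> 2 * t" "m > 0" using t unfolding m_def by linarith+
  have E: "0 \<le> riesz_energy s P" "riesz_energy s P \<le> K * n^2"
    using riesz_energy_nonneg riesz_energy_le_if_s_adaptable[OF assms(1,5)] by (auto simp: n_def)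
  have "n * real m^2 \<le> n * (4 * t^2)"
    using m n power_mono[OF m(2), of 2] by (simp add: power_mult_distrib)
  also have "\<dots> = 4 * (n powr 1 * (n powr (1/3) * n powr (1/3)))"
    using n by (simp add: t_def power2_eq_square)
  also have "\<dots> = 4 * n powr (5/3)"
    unfolding powr_add[symmetric] by simp
  also have "\<dots> \<le> 4 * n powr (11/6)"
    using n by (intro mult_left_mono powr_mono) auto
  finally have first: "n * real m^2 \<le> 4 * n powr (11/6)" .
  have "real m * (sqrt 2 / real m) powr s = sqrt 2 powr s * real m powr (1 - s)"
    using m(3) by (simp add: powr_divide powr_diff)
  also have "\<dots> \<le> 2 * t powr (1 - s)"
  proof (intro mult_mono powr_mono2')
    show "sqrt 2 powr s \<le> 2"
      using powr_mono[of s 2 "sqrt 2"] assms(3) by simp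
  qed (use m t assms(2) in auto)
  also have "\<dots> \<le> 2 * n powr (-1/6)"
    using n assms(2) by (auto simp: t_def powr_powr intro!: powr_mono)
  finally have "real m * (sqrt 2 / real m) powr s * riesz_energy s P \<le> 2 * n powr (-1/6) * (K * n^2)"
    by (rule mult_mono[OF _ E(2)]) (use E(1) in auto)
  also have "\<dots> = 2 * K * (n powr (-1/6) * n powr 2)"
    using n by (simp add: powr_numeral)
  also have "\<dots> = 2 * K * n powr (11/6)"
    unfolding powr_add[symmetric] by simp
  finally have second: "real m * (sqrt 2 / real m) powr s * riesz_energy s P \<le> 2 * K * n powr (11/6)" .
  have "finite P" "P \<subseteq> {0..1} \<times> {0..1}" "0 \<le> s"
    using assms(1,2) by (auto simp: s_adaptable_def)
  from sum_card_on_line_sq_le[OF this(1,2) assms(4) m(3) this(3)] first second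
  show ?thesis by (simp add: n_def algebra_simps)
qed

lemma card_Pi_ab:
  assumes "finite P"
  shows "card (Pi_ab \<alpha> \<beta> P) = (\<Sum>p\<in>P. card (points_on_line P p \<alpha>) * card (points_on_line P p \<beta>))"
proof -
  have "Pi_ab \<alpha> \<beta> P = (SIGMA p:P. points_on_line P p \<alpha> \<times> points_on_line P p \<beta>)"
    by (auto simp: Pi_ab_def points_on_line_def)
  then show ?thesis
    using assms by (simp add: card_SigmaI card_cartesian_product points_on_line_def)
qed

lemma card_Pi_ab_le_power:
  assumes "s_adaptable s K P" "3/2 \<le> s" "s \<le> 2" "\<alpha> \<noteq> 0" "\<beta> \<noteq> 0" "card P \<ge> 2"
  shows "real (card (Pi_ab \<alpha> \<beta> P)) \<le> (4 + 4 * K) * real (card P) powr (11/6)"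
proof -
  define a where "a p = real (card (points_on_line P p \<alpha>))" for p
  define b where "b p = real (card (points_on_line P p \<beta>))" for p
  have "finite P" using assms(1) by (simp add: s_adaptable_def)
  then have "real (card (Pi_ab \<alpha> \<beta> P)) = (\<Sum>p\<in>P. a p * b p)"
    by (simp add: card_Pi_ab a_def b_def)
  also have "\<dots> \<le> (\<Sum>p\<in>P. (a p ^ 2 + b p ^ 2) / 2)"
  proof (rule sum_mono)
    show "a p * b p \<le> (a p ^ 2 + b p ^ 2) / 2" for p
      using sum_squares_bound[of "a p" "b p"] by (simp add: power2_eq_square)
  qed
  also have "\<dots> = ((\<Sum>p\<in>P. a p ^ 2) + (\<Sum>p\<in>P. b p ^ 2)) / 2"
    by (simp add: sum.distrib flip: sum_divide_distrib)
  also have "\<dots> \<le> (4 + 4 * K) * real (card P) powr (11/6)"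
    using sum_card_on_line_sq_le_power[OF assms(1-3) assms(4) assms(6)]
      sum_card_on_line_sq_le_power[OF assms(1-3) assms(5) assms(6)]
    by (simp add: a_def b_def)
  finally show ?thesis .
qed

theorem theorem3:
  fixes s \<alpha> \<beta> K :: real and S :: "nat set" and P :: "nat \<Rightarrow> (real \<times> real) set"
  assumes "3/2 < s" and "s \<le> 2" and "\<alpha> > 0" and "\<beta> > 0" and "K > 0"
    and "infinite S"
    and "\<And>n. n \<in> S \<Longrightarrow> card (P n) = n \<and> s_adaptable s K (P n)"
  shows "\<exists>C>0. \<exists>N::nat>0. \<forall>n\<in>S. n > N \<longrightarrow>
           real (card (Pi_ab \<alpha> \<beta> (P n))) \<le> C * real n powr (4/3 + 1/s) * ln (real n)"
proof (intro exI[of _ "4 + 4 * K"] conjI exI[of _ "2 :: nat"] ballI impI)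
  fix n assume "n \<in> S" "2 < n"
  then have n: "card (P n) = n" "s_adaptable s K (P n)" "3 \<le> real n"
    using assms(7) by auto
  have "real (card (Pi_ab \<alpha> \<beta> (P n))) \<le> (4 + 4 * K) * real n powr (11/6)"
    using card_Pi_ab_le_power[OF n(2)] n(1,3) assms(1-4) by simp
  also have "\<dots> \<le> (4 + 4 * K) * real n powr (4/3 + 1/s)"
    using assms(1,2,5) n(3) by (intro mult_left_mono powr_mono) (auto simp: field_simps)
  also have "\<dots> \<le> (4 + 4 * K) * real n powr (4/3 + 1/s) * ln (real n)"
  proof -
    have "1 \<le> ln (real n)"
      using n(3) exp_le by (subst ln_ge_iff) auto
    moreover have "0 \<le> (4 + 4 * K) * real n powr (4/3 + 1/s)" using assms(5) by simp
    ultimately show ?thesis by (metis mult_left_mono mult.right_neutral)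
  qed
  finally show "real (card (Pi_ab \<alpha> \<beta> (P n))) \<le> (4 + 4 * K) * real n powr (4/3 + 1/s) * ln (real n)" .
qed (use assms(5) in auto)

end
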